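(* Let $N\ge1$, $\mathbf{S}=(\mathsf{SNR}_{s,r},\mathsf{SNR}_{s,1},\dots,\mathsf{SNR}_{s,N},\mathsf{SNR}_{r,1},\dots,\mathsf{SNR}_{r,N})\in[0,\infty)^{2N+1}$, $\rho\in[0,1]$, $\mathsf{C}(x)=\tfrac12\log(1+x)$, and for $j=1,\dots,N$ $$f_j(\rho,\mathbf{S})=\mathsf{SNR}_{s,j}+\mathsf{SNR}_{r,j}+2\rho\sqrt{\mathsf{SNR}_{s,j}\mathsf{SNR}_{r,j}},\qquad g^*_j(\rho,\mathbf{S})=(1-\rho^2)\,\mathsf{SNR}_{s,r},$$ $$R_{DF}(\rho,\mathbf{S})=\min_{1\le j\le N}\min\big(\mathsf{C}(f_j(\rho,\mathbf{S})),\mathsf{C}(g^*_j(\rho,\mathbf{S}))\big).$$ Then $R_{DF}(\rho,\mathbf{S})$ is concave in $\rho\in[0,1]$ for fixed $\mathbf{S}$, concave in $\mathbf{S}\in[0,\infty)^{2N+1}$ for fixed $\rho$, and the map $(t,\mathbf{S})\mapsto R_{DF}(\sqrt t,\mathbf{S})$ is quasi-concave on $[0,1]\times[0,\infty)^{2N+1}$ (i.e., quasi-concave in $(\rho^2,\mathbf{S})$).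
   Context: $R_{DF}$ is the decode-forward rate expression for a real AWGN multicast relay channel with source $s$, relay $r$, destinations $1,\dots,N$, link SNRs $\mathsf{SNR}_{u,v}\ge0$ and source–relay input correlation coefficient $\rho$. A function $F$ on a convex set is quasi-concave if $F(\lambda x_1+(1-\lambda)x_2)\ge\min(F(x_1),F(x_2))$ for all $x_1,x_2$ and $\lambda\in[0,1]$. *)

theory Defs
  imports "HOL-Analysis.Analysis"
begin

definition Cap :: "real \<Rightarrow> real" where
  "Cap x = 1/2 * ln (1 + x)"

text \<open>A channel-SNR vector S = (SNR_sr, SNR_s1..SNR_sN, SNR_r1..SNR_rN) is represented by
  sr :: real, s :: nat \<Rightarrow> real, r :: nat \<Rightarrow> real, only indices 1..N being relevant.\<close>
definition f_j :: "nat \<Rightarrow> real \<Rightarrow> (nat \<Rightarrow> real) \<Rightarrow> (nat \<Rightarrow> real) \<Rightarrow> real" where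
  "f_j j \<rho> s r = s j + r j + 2 * \<rho> * sqrt (s j * r j)"

definition g_star :: "real \<Rightarrow> real \<Rightarrow> real" where
  "g_star \<rho> sr = (1 - \<rho>\<^sup>2) * sr"

definition R_DF :: "nat \<Rightarrow> real \<Rightarrow> real \<Rightarrow> (nat \<Rightarrow> real) \<Rightarrow> (nat \<Rightarrow> real) \<Rightarrow> real" where
  "R_DF N \<rho> sr s r = Min ((\<lambda>j. min (Cap (f_j j \<rho> s r)) (Cap (g_star \<rho> sr))) ` {1..N})"

definition S_dom :: "nat \<Rightarrow> real \<Rightarrow> (nat \<Rightarrow> real) \<Rightarrow> (nat \<Rightarrow> real) \<Rightarrow> bool" where
  "S_dom N sr s r \<longleftrightarrow> sr \<ge> 0 \<and> (\<forall>j\<in>{1..N}. s j \<ge> 0 \<and> r j \<ge> 0)"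

end

theory Submission
  imports Defs
begin

text \<open>A minimum over finitely many links of (quasi-)concave functions is (quasi-)concave, and
  \<open>C\<close> is concave and increasing, so it suffices to study \<open>f_j\<close> and \<open>g\<^sup>*_j\<close>. In \<open>\<rho>\<close>, \<open>f_j\<close> is affine
  and \<open>g\<^sup>*_j\<close> concave; in \<open>S\<close>, \<open>g\<^sup>*_j\<close> is linear and \<open>f_j\<close> concave because the geometric mean
  \<open>\<surd>(s r)\<close> is. In \<open>(t, S)\<close> with \<open>t = \<rho>\<^sup>2\<close>, \<open>g\<^sup>*_j = (1 - t) SNR_sr\<close> is a product of two
  nonnegative affine functions, hence quasi-concave, while \<open>f_j = s + r + 2\<surd>(t s r)\<close> is
  homogeneous in \<open>(s, r)\<close>, which reduces its quasi-concavity to points on a common level set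
  \<open>f_j = c\<close>. Writing \<open>w = c - s - r \<ge> 0\<close>, the condition \<open>f_j \<ge> c\<close> reads
  \<open>4 c t \<ge> (w + s + r) w\<^sup>2 / (s r) = w\<^sup>2/s + w\<^sup>2/r + w\<^sup>3/(s r)\<close>, a convex function of \<open>(w, s, r)\<close>,
  which is checked against its supporting planes.\<close>

lemma Cap_mono: "0 \<le> x \<Longrightarrow> x \<le> y \<Longrightarrow> Cap x \<le> Cap y"
  unfolding Cap_def by simp

lemma Cap_concave:
  assumes "0 \<le> x" "0 \<le> y" "0 \<le> a" "a \<le> 1"
  shows "a * Cap x + (1 - a) * Cap y \<le> Cap (a * x + (1 - a) * y)"
proof -
  have "a * ln (1 + x) + (1 - a) * ln (1 + y) \<le> ln (1 + (a * x + (1 - a) * y))"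
    using concave_onD[OF ln_concave, of "1 - a" "1 + x" "1 + y"] assms by (simp add: algebra_simps)
  then show ?thesis unfolding Cap_def by linarith
qed

lemma min_Cap_le:
  assumes "0 \<le> x" "0 \<le> y" "min x y \<le> z"
  shows "min (Cap x) (Cap y) \<le> Cap z"
  using assms Cap_mono[of x z] Cap_mono[of y z] by linarith

lemma sqrt_mult_concave:
  fixes s1 r1 s2 r2 a :: real
  assumes "0 \<le> s1" "0 \<le> r1" "0 \<le> s2" "0 \<le> r2" "0 \<le> a" "a \<le> 1"
  shows "a * sqrt (s1 * r1) + (1 - a) * sqrt (s2 * r2)
    \<le> sqrt ((a * s1 + (1 - a) * s2) * (a * r1 + (1 - a) * r2))"
proof (rule real_le_rsqrt)
  define u1 v1 u2 v2 where "u1 = sqrt s1" "v1 = sqrt r1" "u2 = sqrt s2" "v2 = sqrt r2"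
  have sq: "s1 = u1\<^sup>2" "r1 = v1\<^sup>2" "s2 = u2\<^sup>2" "r2 = v2\<^sup>2"
    using assms by (simp_all add: u1_v1_u2_v2_def)
  have "(a * u1\<^sup>2 + (1 - a) * u2\<^sup>2) * (a * v1\<^sup>2 + (1 - a) * v2\<^sup>2)
      - (a * (u1 * v1) + (1 - a) * (u2 * v2))\<^sup>2 = a * (1 - a) * (u1 * v2 - u2 * v1)\<^sup>2"
    by (simp add: power2_eq_square algebra_simps)
  moreover have "0 \<le> a * (1 - a) * (u1 * v2 - u2 * v1)\<^sup>2" using assms by simp
  moreover have "sqrt (s1 * r1) = u1 * v1" "sqrt (s2 * r2) = u2 * v2"
    by (simp_all add: u1_v1_u2_v2_def real_sqrt_mult)
  ultimately show "(a * sqrt (s1 * r1) + (1 - a) * sqrt (s2 * r2))\<^sup>2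
      \<le> (a * s1 + (1 - a) * s2) * (a * r1 + (1 - a) * r2)"
    by (simp only: sq)
qed

lemma mult_quasiconcave:
  fixes u1 v1 u2 v2 a :: real
  assumes "0 \<le> u1" "0 \<le> v1" "0 \<le> u2" "0 \<le> v2" "0 \<le> a" "a \<le> 1"
  shows "min (u1 * v1) (u2 * v2) \<le> (a * u1 + (1 - a) * u2) * (a * v1 + (1 - a) * v2)"
proof -
  define m where "m = min (u1 * v1) (u2 * v2)"
  have m0: "0 \<le> m" and m1: "m \<le> u1 * v1" and m2: "m \<le> u2 * v2" using assms by (simp_all add: m_def)
  have "m * m \<le> (u1 * v1) * (u2 * v2)" using mult_mono[OF m1 m2] m0 assms by simp
  also have "\<dots> \<le> ((u1 * v2 + u2 * v1) / 2)\<^sup>2"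
    using sum_squares_ge_zero[of "u1 * v2 - u2 * v1" 0] by (simp add: power2_eq_square field_simps)
  finally have cross: "2 * m \<le> u1 * v2 + u2 * v1"
    using assms m0 power2_le_imp_le[of m "(u1 * v2 + u2 * v1) / 2"] by (simp add: power2_eq_square)
  have "m = a\<^sup>2 * m + (1 - a)\<^sup>2 * m + a * (1 - a) * (2 * m)"
    by (simp add: power2_eq_square algebra_simps)
  also have "\<dots> \<le> a\<^sup>2 * (u1 * v1) + (1 - a)\<^sup>2 * (u2 * v2) + a * (1 - a) * (u1 * v2 + u2 * v1)"
    using m1 m2 cross assms by (intro add_mono mult_left_mono) simp_all
  also have "\<dots> = (a * u1 + (1 - a) * u2) * (a * v1 + (1 - a) * v2)"
    by (simp add: power2_eq_square algebra_simps)
  finally show ?thesis unfolding m_def .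
qed

lemma convex_comb_min_le:
  fixes a x1 x2 y1 y2 x y :: real
  assumes "0 \<le> a" "a \<le> 1" "a * x1 + (1 - a) * x2 \<le> x" "a * y1 + (1 - a) * y2 \<le> y"
  shows "a * min x1 y1 + (1 - a) * min x2 y2 \<le> min x y"
proof -
  have "a * min x1 y1 \<le> a * x1" "a * min x1 y1 \<le> a * y1"
    "(1 - a) * min x2 y2 \<le> (1 - a) * x2" "(1 - a) * min x2 y2 \<le> (1 - a) * y2"
    using assms by (auto intro: mult_left_mono)
  with assms show ?thesis by linarith
qed

lemma min_min_le_min:
  fixes x1 x2 y1 y2 x y :: "'a :: linorder"
  assumes "min x1 x2 \<le> x" "min y1 y2 \<le> y"
  shows "min (min x1 y1) (min x2 y2) \<le> min x y"
  using assms unfolding min_le_iff_disj min.bounded_iff by auto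

lemma Min_image_convex_comb_le:
  fixes f g h :: "'a \<Rightarrow> real"
  assumes "finite J" "J \<noteq> {}" "0 \<le> a" "a \<le> 1"
    and "\<And>j. j \<in> J \<Longrightarrow> a * f j + (1 - a) * g j \<le> h j"
  shows "a * Min (f ` J) + (1 - a) * Min (g ` J) \<le> Min (h ` J)"
proof -
  have "Min (h ` J) \<in> h ` J" using assms by (intro Min_in) auto
  then obtain j where j: "j \<in> J" "Min (h ` J) = h j" by auto
  have "a * Min (f ` J) \<le> a * f j" "(1 - a) * Min (g ` J) \<le> (1 - a) * g j"
    using assms j by (auto intro: mult_left_mono)
  with assms(5)[OF j(1)] j(2) show ?thesis by linarith
qed

lemma Min_image_min_le:
  fixes f g h :: "'a \<Rightarrow> 'b :: linorder"
  assumes "finite J" "J \<noteq> {}" "\<And>j. j \<in> J \<Longrightarrow> min (f j) (g j) \<le> h j"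
  shows "min (Min (f ` J)) (Min (g ` J)) \<le> Min (h ` J)"
proof -
  have "Min (h ` J) \<in> h ` J" using assms by (intro Min_in) auto
  then obtain j where j: "j \<in> J" "Min (h ` J) = h j" by auto
  have "Min (f ` J) \<le> f j" "Min (g ` J) \<le> g j" using assms j by auto
  with assms(3)[OF j(1)] j(2) show ?thesis by (auto simp: min_le_iff_disj)
qed

text \<open>The supporting hyperplane at a point with \<open>w/s = k\<close>, \<open>w/r = l\<close> of the convex function
  \<open>(w + s + r) w\<^sup>2 / (s r) = w\<^sup>2/s + w\<^sup>2/r + w\<^sup>3/(s r)\<close>.\<close>
definition tangent_plane :: "real \<Rightarrow> real \<Rightarrow> real \<Rightarrow> real \<Rightarrow> real \<Rightarrow> real" where
  "tangent_plane k l w s r = (2 * k + 2 * l + 3 * k * l) * w - k\<^sup>2 * (1 + l) * s - l\<^sup>2 * (1 + k) * r"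

lemma amgm_three:
  fixes w q v :: real
  assumes "0 \<le> w" "0 \<le> q" "0 \<le> v"
  shows "q * v * (3 * w - q - v) \<le> w ^ 3"
proof -
  define m where "m = sqrt (q * v)"
  have m0: "0 \<le> m" and mm: "m\<^sup>2 = q * v" using assms by (simp_all add: m_def)
  have "0 \<le> (w - m)\<^sup>2 * (w + 2 * m)" using assms m0 by simp
  then have cube: "3 * m\<^sup>2 * w - 2 * m ^ 3 \<le> w ^ 3"
    by (simp add: power2_eq_square power3_eq_cube algebra_simps)
  have "2 * m \<le> q + v" using arith_geo_mean_sqrt[of q v] assms by (simp add: m_def)
  then have "2 * m * m\<^sup>2 \<le> (q + v) * m\<^sup>2" by (simp add: mult_right_mono)
  then have "q * v * (3 * w - q - v) \<le> 3 * m\<^sup>2 * w - 2 * m ^ 3"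
    unfolding mm[symmetric] by (simp add: power2_eq_square power3_eq_cube algebra_simps)
  with cube show ?thesis by linarith
qed

lemma tangent_plane_le:
  fixes w s r T k l :: real
  assumes "0 \<le> w" "0 \<le> s" "0 \<le> r" "0 \<le> T" "0 \<le> k" "0 \<le> l" and w: "w\<^sup>2 \<le> T * (s * r)"
  shows "tangent_plane k l w s r \<le> (w + s + r) * T"
proof (cases "s * r = 0")
  case True
  then have "T * (s * r) = 0" by simp
  with w have "w = 0" by simp
  moreover have "0 \<le> k\<^sup>2 * (1 + l) * s + l\<^sup>2 * (1 + k) * r" "0 \<le> (s + r) * T"
    using assms by simp_all
  ultimately show ?thesis by (simp add: tangent_plane_def)
next
  case False
  then have sr: "0 < s * r" using assms by (simp add: less_le)
  have "(2 * k * w - k\<^sup>2 * s) * s \<le> w\<^sup>2"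
    using sum_squares_ge_zero[of "w - k * s" 0] by (simp add: power2_eq_square algebra_simps)
  then have "(2 * k * w - k\<^sup>2 * s) * s * r \<le> w\<^sup>2 * r" using assms by (simp add: mult_right_mono)
  moreover have "(2 * l * w - l\<^sup>2 * r) * r \<le> w\<^sup>2"
    using sum_squares_ge_zero[of "w - l * r" 0] by (simp add: power2_eq_square algebra_simps)
  then have "(2 * l * w - l\<^sup>2 * r) * r * s \<le> w\<^sup>2 * s" using assms by (simp add: mult_right_mono)
  moreover have "(k * s) * (l * r) * (3 * w - k * s - l * r) \<le> w ^ 3"
    using assms by (intro amgm_three) auto
  moreover have "tangent_plane k l w s r * (s * r) = (2 * k * w - k\<^sup>2 * s) * s * r
      + (2 * l * w - l\<^sup>2 * r) * r * s + (k * s) * (l * r) * (3 * w - k * s - l * r)"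
    unfolding tangent_plane_def by (simp add: power2_eq_square algebra_simps)
  moreover have "(w + s + r) * w\<^sup>2 = w\<^sup>2 * r + w\<^sup>2 * s + w ^ 3"
    by (simp add: power2_eq_square power3_eq_cube algebra_simps)
  ultimately have "tangent_plane k l w s r * (s * r) \<le> (w + s + r) * w\<^sup>2" by linarith
  also have "\<dots> \<le> (w + s + r) * T * (s * r)"
    using w assms by (simp add: mult_left_mono mult.assoc)
  finally show ?thesis using sr by (simp add: mult_le_cancel_right)
qed

lemma tangent_plane_convex_comb:
  "tangent_plane k l (a * w1 + b * w2) (a * s1 + b * s2) (a * r1 + b * r2)
    = a * tangent_plane k l w1 s1 r1 + b * tangent_plane k l w2 s2 r2"
  unfolding tangent_plane_def by (simp add: algebra_simps)

lemma tangent_plane_touches: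
  assumes "0 < s" "0 < r"
  shows "tangent_plane (w / s) (w / r) w s r = (w + s + r) * w\<^sup>2 / (s * r)"
  using assms unfolding tangent_plane_def
  by (simp add: field_simps power2_eq_square power3_eq_cube)

definition coh_snr :: "real \<Rightarrow> real \<Rightarrow> real \<Rightarrow> real" where
  "coh_snr t s r = s + r + 2 * sqrt t * sqrt (s * r)"

lemma f_j_sqrt: "f_j j (sqrt t) s r = coh_snr t (s j) (r j)"
  unfolding f_j_def coh_snr_def by simp

lemma coh_snr_nonneg: "0 \<le> t \<Longrightarrow> 0 \<le> s \<Longrightarrow> 0 \<le> r \<Longrightarrow> 0 \<le> coh_snr t s r"
  unfolding coh_snr_def by simp

lemma coh_snr_mono:
  assumes "0 \<le> t" "0 \<le> s" "0 \<le> r" "s \<le> s'" "r \<le> r'"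
  shows "coh_snr t s r \<le> coh_snr t s' r'"
proof -
  have "sqrt (s * r) \<le> sqrt (s' * r')" using assms by (simp add: mult_mono)
  then have "2 * sqrt t * sqrt (s * r) \<le> 2 * sqrt t * sqrt (s' * r')"
    using assms by (simp add: mult_left_mono)
  then show ?thesis unfolding coh_snr_def using assms by linarith
qed

lemma coh_snr_scale: "0 \<le> c \<Longrightarrow> coh_snr t (c * s) (c * r) = c * coh_snr t s r"
  unfolding coh_snr_def
  by (simp add: real_sqrt_mult real_sqrt_abs power2_eq_square[symmetric] algebra_simps)

lemma coh_snr_eq:
  assumes "0 \<le> t" "0 \<le> s" "0 \<le> r" "coh_snr t s r = c"
  shows "0 \<le> c - s - r" "(c - s - r)\<^sup>2 = 4 * t * (s * r)"
proof -
  have w: "c - s - r = 2 * sqrt t * sqrt (s * r)" using assms(4) unfolding coh_snr_def by linarith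
  show "0 \<le> c - s - r" unfolding w using assms by simp
  show "(c - s - r)\<^sup>2 = 4 * t * (s * r)" unfolding w using assms by (simp add: power_mult_distrib)
qed

text \<open>Convexity of \<open>w\<^sup>2 / (s r)\<close> on a plane \<open>w + s + r = c\<close>: averaging the supporting-plane bounds
  of the two points, taken at the tangency point of their convex combination.\<close>
lemma sq_le_mult_convex_comb_on_plane:
  fixes w1 s1 r1 w2 s2 r2 T1 T2 a c :: real
  assumes "0 \<le> w1" "0 \<le> s1" "0 \<le> r1" "0 \<le> w2" "0 \<le> s2" "0 \<le> r2" "0 \<le> T1" "0 \<le> T2"
    and a: "0 \<le> a" "a \<le> 1" and c: "0 < c"
    and w1: "w1\<^sup>2 \<le> T1 * (s1 * r1)" "w1 + s1 + r1 = c"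
    and w2: "w2\<^sup>2 \<le> T2 * (s2 * r2)" "w2 + s2 + r2 = c"
    and W: "0 \<le> a * w1 + (1 - a) * w2"
    and SR: "0 < a * s1 + (1 - a) * s2" "0 < a * r1 + (1 - a) * r2"
  shows "(a * w1 + (1 - a) * w2)\<^sup>2
    \<le> (a * T1 + (1 - a) * T2) * ((a * s1 + (1 - a) * s2) * (a * r1 + (1 - a) * r2))"
proof -
  define S R W where "S = a * s1 + (1 - a) * s2" "R = a * r1 + (1 - a) * r2" "W = a * w1 + (1 - a) * w2"
  have pos: "0 < S" "0 < R" using SR by (simp_all add: S_R_W_def)
  have "W + S + R = a * (w1 + s1 + r1) + (1 - a) * (w2 + s2 + r2)"
    by (simp add: S_R_W_def algebra_simps)
  then have plane: "W + S + R = c" unfolding w1(2) w2(2) by (simp add: algebra_simps)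
  define k l where "k = W / S" "l = W / R"
  have kl: "0 \<le> k" "0 \<le> l" using W pos by (simp_all add: k_l_def S_R_W_def)
  have "c * W\<^sup>2 / (S * R) = tangent_plane k l W S R"
    using tangent_plane_touches[OF pos, of W] plane by (simp add: k_l_def)
  also have "\<dots> = a * tangent_plane k l w1 s1 r1 + (1 - a) * tangent_plane k l w2 s2 r2"
    unfolding S_R_W_def by (rule tangent_plane_convex_comb)
  also have "\<dots> \<le> a * (c * T1) + (1 - a) * (c * T2)"
    using assms kl tangent_plane_le[of w1 s1 r1 T1 k l] tangent_plane_le[of w2 s2 r2 T2 k l]
    by (intro add_mono mult_left_mono) simp_all
  also have "\<dots> = c * (a * T1 + (1 - a) * T2)" by (simp add: algebra_simps)
  finally show ?thesis
    using SR c by (simp add: S_R_W_def divide_le_eq mult_le_cancel_left_pos)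
qed

lemma coh_snr_level_convex:
  fixes t1 s1 r1 t2 s2 r2 a c :: real
  assumes t1: "0 \<le> t1" and s1: "0 \<le> s1" and r1: "0 \<le> r1"
    and t2: "0 \<le> t2" and s2: "0 \<le> s2" and r2: "0 \<le> r2"
    and a: "0 \<le> a" "a \<le> 1" and c: "0 < c"
    and h1: "coh_snr t1 s1 r1 = c" and h2: "coh_snr t2 s2 r2 = c"
  shows "c \<le> coh_snr (a * t1 + (1 - a) * t2) (a * s1 + (1 - a) * s2) (a * r1 + (1 - a) * r2)"
proof -
  define w1 w2 where "w1 = c - s1 - r1" "w2 = c - s2 - r2"
  define t S R W where "t = a * t1 + (1 - a) * t2" "S = a * s1 + (1 - a) * s2"
    "R = a * r1 + (1 - a) * r2" "W = a * w1 + (1 - a) * w2"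
  note defs = w1_w2_def t_S_R_W_def
  have w1: "0 \<le> w1" "w1\<^sup>2 = 4 * t1 * (s1 * r1)" using coh_snr_eq[OF t1 s1 r1 h1] by (simp_all add: defs)
  have w2: "0 \<le> w2" "w2\<^sup>2 = 4 * t2 * (s2 * r2)" using coh_snr_eq[OF t2 s2 r2 h2] by (simp_all add: defs)
  have nonneg: "0 \<le> t" "0 \<le> S" "0 \<le> R" using assms by (simp_all add: defs)
  have W: "W = c - S - R" by (simp add: defs algebra_simps)
  have "W \<le> 2 * sqrt t * sqrt (S * R)"
  proof (cases "W \<le> 0")
    case True
    moreover have "0 \<le> 2 * sqrt t * sqrt (S * R)" using nonneg by simp
    ultimately show ?thesis by linarith
  next
    case False
    have pos: "0 < b * s \<and> 0 < b * r" if "0 < b * w" "w\<^sup>2 = 4 * t' * (s * r)" "0 \<le> s" "0 \<le> r" "0 \<le> b"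
      for b w t' s r :: real
      using that by (cases "s = 0 \<or> r = 0") (auto simp: zero_less_mult_iff less_le)
    have "0 < a * w1 \<or> 0 < (1 - a) * w2" using False by (auto simp: defs)
    then have "0 < a * s1 \<and> 0 < a * r1 \<or> 0 < (1 - a) * s2 \<and> 0 < (1 - a) * r2"
      using pos[OF _ w1(2) s1 r1] pos[OF _ w2(2) s2 r2] a by auto
    moreover have "0 \<le> a * s1" "0 \<le> a * r1" "0 \<le> (1 - a) * s2" "0 \<le> (1 - a) * r2"
      using assms by simp_all
    ultimately have SR: "0 < S" "0 < R" unfolding t_S_R_W_def by linarith+
    have "W\<^sup>2 \<le> 4 * t * (S * R)"
      using sq_le_mult_convex_comb_on_plane[of w1 s1 r1 w2 s2 r2 "4 * t1" "4 * t2" a c]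
        assms w1 w2 False SR by (simp add: defs algebra_simps)
    then have "W \<le> sqrt (4 * t * (S * R))" by (rule real_le_rsqrt)
    also have "\<dots> = 2 * sqrt t * sqrt (S * R)" by (simp add: real_sqrt_mult)
    finally show ?thesis .
  qed
  then show ?thesis using W unfolding coh_snr_def t_S_R_W_def by linarith
qed

text \<open>Since \<open>coh_snr t\<close> is homogeneous and monotone in \<open>(s, r)\<close>, shrinking the SNRs of both
  points moves them onto the common level set of the smaller value.\<close>
lemma coh_snr_quasiconcave:
  fixes t1 s1 r1 t2 s2 r2 a :: real
  assumes t1: "0 \<le> t1" and s1: "0 \<le> s1" and r1: "0 \<le> r1"
    and t2: "0 \<le> t2" and s2: "0 \<le> s2" and r2: "0 \<le> r2"
    and a: "0 \<le> a" "a \<le> 1"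
  shows "min (coh_snr t1 s1 r1) (coh_snr t2 s2 r2)
    \<le> coh_snr (a * t1 + (1 - a) * t2) (a * s1 + (1 - a) * s2) (a * r1 + (1 - a) * r2)"
proof -
  define c where "c = min (coh_snr t1 s1 r1) (coh_snr t2 s2 r2)"
  define m1 m2 where "m1 = c / coh_snr t1 s1 r1" "m2 = c / coh_snr t2 s2 r2"
  have t: "0 \<le> a * t1 + (1 - a) * t2" using assms by simp
  show ?thesis
  proof (cases "c \<le> 0")
    case True
    moreover have "0 \<le> coh_snr (a * t1 + (1 - a) * t2) (a * s1 + (1 - a) * s2) (a * r1 + (1 - a) * r2)"
      using assms by (intro coh_snr_nonneg t) simp_all
    ultimately show ?thesis unfolding c_def by linarith
  next
    case False
    then have c: "0 < c" "c \<le> coh_snr t1 s1 r1" "c \<le> coh_snr t2 s2 r2" by (auto simp: c_def)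
    then have m: "0 \<le> m1" "m1 \<le> 1" "0 \<le> m2" "m2 \<le> 1"
      by (simp_all add: m1_m2_def)
    have "coh_snr t1 (m1 * s1) (m1 * r1) = c" "coh_snr t2 (m2 * s2) (m2 * r2) = c"
      using c by (simp_all only: coh_snr_scale m) (simp_all add: m1_m2_def)
    then have "c \<le> coh_snr (a * t1 + (1 - a) * t2)
        (a * (m1 * s1) + (1 - a) * (m2 * s2)) (a * (m1 * r1) + (1 - a) * (m2 * r2))"
      using False assms m by (intro coh_snr_level_convex) auto
    also have "\<dots> \<le> coh_snr (a * t1 + (1 - a) * t2) (a * s1 + (1 - a) * s2) (a * r1 + (1 - a) * r2)"
      using assms m by (intro coh_snr_mono t add_mono mult_left_mono mult_left_le_one_le) auto
    finally show ?thesis unfolding c_def .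
  qed
qed

lemma f_j_nonneg: "0 \<le> \<rho> \<Longrightarrow> 0 \<le> s j \<Longrightarrow> 0 \<le> r j \<Longrightarrow> 0 \<le> f_j j \<rho> s r"
  unfolding f_j_def by simp

lemma f_j_affine_rho:
  "f_j j (a * \<rho>1 + (1 - a) * \<rho>2) s r = a * f_j j \<rho>1 s r + (1 - a) * f_j j \<rho>2 s r"
  unfolding f_j_def by (simp add: algebra_simps)

lemma f_j_concave_snr:
  assumes "0 \<le> \<rho>" "0 \<le> s1 j" "0 \<le> r1 j" "0 \<le> s2 j" "0 \<le> r2 j" "0 \<le> a" "a \<le> 1"
  shows "a * f_j j \<rho> s1 r1 + (1 - a) * f_j j \<rho> s2 r2
    \<le> f_j j \<rho> (\<lambda>j. a * s1 j + (1 - a) * s2 j) (\<lambda>j. a * r1 j + (1 - a) * r2 j)"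
proof -
  have "2 * \<rho> * (a * sqrt (s1 j * r1 j) + (1 - a) * sqrt (s2 j * r2 j))
      \<le> 2 * \<rho> * sqrt ((a * s1 j + (1 - a) * s2 j) * (a * r1 j + (1 - a) * r2 j))"
    using assms by (intro mult_left_mono sqrt_mult_concave) auto
  then show ?thesis unfolding f_j_def by (simp add: algebra_simps)
qed

lemma g_star_nonneg: "0 \<le> \<rho> \<Longrightarrow> \<rho> \<le> 1 \<Longrightarrow> 0 \<le> sr \<Longrightarrow> 0 \<le> g_star \<rho> sr"
  unfolding g_star_def by (simp add: power_le_one)

lemma g_star_concave_rho:
  assumes "0 \<le> sr" "0 \<le> a" "a \<le> 1"
  shows "a * g_star \<rho>1 sr + (1 - a) * g_star \<rho>2 sr \<le> g_star (a * \<rho>1 + (1 - a) * \<rho>2) sr"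
proof -
  have "(a * \<rho>1 + (1 - a) * \<rho>2)\<^sup>2 = a * \<rho>1\<^sup>2 + (1 - a) * \<rho>2\<^sup>2 - a * (1 - a) * (\<rho>1 - \<rho>2)\<^sup>2"
    by (simp add: power2_eq_square algebra_simps)
  moreover have "0 \<le> a * (1 - a) * (\<rho>1 - \<rho>2)\<^sup>2" using assms by simp
  ultimately have "(1 - (a * \<rho>1\<^sup>2 + (1 - a) * \<rho>2\<^sup>2)) * sr \<le> (1 - (a * \<rho>1 + (1 - a) * \<rho>2)\<^sup>2) * sr"
    using assms by (intro mult_right_mono) auto
  then show ?thesis unfolding g_star_def by (simp add: algebra_simps)
qed

lemma g_star_affine_snr:
  "g_star \<rho> (a * sr1 + (1 - a) * sr2) = a * g_star \<rho> sr1 + (1 - a) * g_star \<rho> sr2"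
  unfolding g_star_def by (simp add: algebra_simps)

lemma g_star_sqrt: "0 \<le> t \<Longrightarrow> g_star (sqrt t) sr = (1 - t) * sr"
  unfolding g_star_def by simp

definition link_rate :: "nat \<Rightarrow> real \<Rightarrow> real \<Rightarrow> (nat \<Rightarrow> real) \<Rightarrow> (nat \<Rightarrow> real) \<Rightarrow> real" where
  "link_rate j \<rho> sr s r = min (Cap (f_j j \<rho> s r)) (Cap (g_star \<rho> sr))"

lemma R_DF_eq_Min_link_rate: "R_DF N \<rho> sr s r = Min ((\<lambda>j. link_rate j \<rho> sr s r) ` {1..N})"
  unfolding R_DF_def link_rate_def ..

lemma link_rate_concave_rho:
  assumes "0 \<le> sr" "0 \<le> s j" "0 \<le> r j" "\<rho>1 \<in> {0..1}" "\<rho>2 \<in> {0..1}" "0 \<le> a" "a \<le> 1"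
  shows "a * link_rate j \<rho>1 sr s r + (1 - a) * link_rate j \<rho>2 sr s r
    \<le> link_rate j (a * \<rho>1 + (1 - a) * \<rho>2) sr s r"
  unfolding link_rate_def
proof (rule convex_comb_min_le)
  show "a * Cap (f_j j \<rho>1 s r) + (1 - a) * Cap (f_j j \<rho>2 s r) \<le> Cap (f_j j (a * \<rho>1 + (1 - a) * \<rho>2) s r)"
    using assms by (simp add: f_j_affine_rho Cap_concave f_j_nonneg)
  have "a * Cap (g_star \<rho>1 sr) + (1 - a) * Cap (g_star \<rho>2 sr)
      \<le> Cap (a * g_star \<rho>1 sr + (1 - a) * g_star \<rho>2 sr)"
    using assms by (intro Cap_concave g_star_nonneg) auto
  also have "\<dots> \<le> Cap (g_star (a * \<rho>1 + (1 - a) * \<rho>2) sr)"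
    using assms by (intro Cap_mono g_star_concave_rho add_nonneg_nonneg mult_nonneg_nonneg g_star_nonneg) auto
  finally show "a * Cap (g_star \<rho>1 sr) + (1 - a) * Cap (g_star \<rho>2 sr)
      \<le> Cap (g_star (a * \<rho>1 + (1 - a) * \<rho>2) sr)" .
qed (use assms in auto)

lemma link_rate_concave_snr:
  assumes "\<rho> \<in> {0..1}" "0 \<le> sr1" "0 \<le> s1 j" "0 \<le> r1 j" "0 \<le> sr2" "0 \<le> s2 j" "0 \<le> r2 j"
    "0 \<le> a" "a \<le> 1"
  shows "a * link_rate j \<rho> sr1 s1 r1 + (1 - a) * link_rate j \<rho> sr2 s2 r2
    \<le> link_rate j \<rho> (a * sr1 + (1 - a) * sr2)
        (\<lambda>j. a * s1 j + (1 - a) * s2 j) (\<lambda>j. a * r1 j + (1 - a) * r2 j)"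
  unfolding link_rate_def
proof (rule convex_comb_min_le)
  have "a * Cap (f_j j \<rho> s1 r1) + (1 - a) * Cap (f_j j \<rho> s2 r2)
      \<le> Cap (a * f_j j \<rho> s1 r1 + (1 - a) * f_j j \<rho> s2 r2)"
    using assms by (intro Cap_concave f_j_nonneg) auto
  also have "\<dots> \<le> Cap (f_j j \<rho> (\<lambda>j. a * s1 j + (1 - a) * s2 j) (\<lambda>j. a * r1 j + (1 - a) * r2 j))"
    using assms by (intro Cap_mono f_j_concave_snr add_nonneg_nonneg mult_nonneg_nonneg f_j_nonneg) auto
  finally show "a * Cap (f_j j \<rho> s1 r1) + (1 - a) * Cap (f_j j \<rho> s2 r2)
      \<le> Cap (f_j j \<rho> (\<lambda>j. a * s1 j + (1 - a) * s2 j) (\<lambda>j. a * r1 j + (1 - a) * r2 j))" .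
  show "a * Cap (g_star \<rho> sr1) + (1 - a) * Cap (g_star \<rho> sr2) \<le> Cap (g_star \<rho> (a * sr1 + (1 - a) * sr2))"
    using assms by (simp add: g_star_affine_snr Cap_concave g_star_nonneg)
qed (use assms in auto)

lemma link_rate_quasiconcave:
  assumes "t1 \<in> {0..1}" "t2 \<in> {0..1}" "0 \<le> sr1" "0 \<le> s1 j" "0 \<le> r1 j"
    "0 \<le> sr2" "0 \<le> s2 j" "0 \<le> r2 j" "0 \<le> a" "a \<le> 1"
  shows "min (link_rate j (sqrt t1) sr1 s1 r1) (link_rate j (sqrt t2) sr2 s2 r2)
    \<le> link_rate j (sqrt (a * t1 + (1 - a) * t2)) (a * sr1 + (1 - a) * sr2)
        (\<lambda>j. a * s1 j + (1 - a) * s2 j) (\<lambda>j. a * r1 j + (1 - a) * r2 j)"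
  unfolding link_rate_def
proof (rule min_min_le_min)
  have t: "0 \<le> a * t1 + (1 - a) * t2" using assms by simp
  show "min (Cap (f_j j (sqrt t1) s1 r1)) (Cap (f_j j (sqrt t2) s2 r2))
      \<le> Cap (f_j j (sqrt (a * t1 + (1 - a) * t2))
          (\<lambda>j. a * s1 j + (1 - a) * s2 j) (\<lambda>j. a * r1 j + (1 - a) * r2 j))"
    unfolding f_j_sqrt using assms
    by (intro min_Cap_le coh_snr_nonneg coh_snr_quasiconcave) auto
  have "1 - (a * t1 + (1 - a) * t2) = a * (1 - t1) + (1 - a) * (1 - t2)"
    by (simp add: algebra_simps)
  then show "min (Cap (g_star (sqrt t1) sr1)) (Cap (g_star (sqrt t2) sr2))
      \<le> Cap (g_star (sqrt (a * t1 + (1 - a) * t2)) (a * sr1 + (1 - a) * sr2))"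
    using assms unfolding g_star_sqrt[OF t]
    by (simp add: g_star_sqrt min_Cap_le mult_quasiconcave)
qed

lemma R_DF_concave_rho:
  assumes "N \<ge> 1" "S_dom N sr s r"
  shows "concave_on {0..1} (\<lambda>\<rho>. R_DF N \<rho> sr s r)"
  unfolding concave_on_iff
proof (intro conjI ballI allI impI)
  fix \<rho>1 \<rho>2 u v :: real
  assume "\<rho>1 \<in> {0..1}" "\<rho>2 \<in> {0..1}" "0 \<le> u" "0 \<le> v" "u + v = 1"
  moreover from this have v: "v = 1 - u" by simp
  ultimately show "u * R_DF N \<rho>1 sr s r + v * R_DF N \<rho>2 sr s r \<le> R_DF N (u *\<^sub>R \<rho>1 + v *\<^sub>R \<rho>2) sr s r"
    unfolding R_DF_eq_Min_link_rate v real_scaleR_def using assms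
    by (intro Min_image_convex_comb_le link_rate_concave_rho) (auto simp: S_dom_def)
qed simp

lemma R_DF_concave_snr:
  assumes "N \<ge> 1" "\<rho> \<in> {0..1}" "S_dom N sr1 s1 r1" "S_dom N sr2 s2 r2" "0 \<le> a" "a \<le> 1"
  shows "a * R_DF N \<rho> sr1 s1 r1 + (1 - a) * R_DF N \<rho> sr2 s2 r2
    \<le> R_DF N \<rho> (a * sr1 + (1 - a) * sr2)
        (\<lambda>j. a * s1 j + (1 - a) * s2 j) (\<lambda>j. a * r1 j + (1 - a) * r2 j)"
  unfolding R_DF_eq_Min_link_rate using assms
  by (intro Min_image_convex_comb_le link_rate_concave_snr) (auto simp: S_dom_def)

lemma R_DF_quasiconcave:
  assumes "N \<ge> 1" "t1 \<in> {0..1}" "t2 \<in> {0..1}" "S_dom N sr1 s1 r1" "S_dom N sr2 s2 r2"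
    "0 \<le> a" "a \<le> 1"
  shows "min (R_DF N (sqrt t1) sr1 s1 r1) (R_DF N (sqrt t2) sr2 s2 r2)
    \<le> R_DF N (sqrt (a * t1 + (1 - a) * t2)) (a * sr1 + (1 - a) * sr2)
        (\<lambda>j. a * s1 j + (1 - a) * s2 j) (\<lambda>j. a * r1 j + (1 - a) * r2 j)"
  unfolding R_DF_eq_Min_link_rate using assms
  by (intro Min_image_min_le link_rate_quasiconcave) (auto simp: S_dom_def)

theorem theorem2:
  fixes N :: nat
  assumes "N \<ge> 1"
  shows
    "(\<forall>sr s r. S_dom N sr s r \<longrightarrow> concave_on {0..1} (\<lambda>\<rho>. R_DF N \<rho> sr s r))
   \<and> (\<forall>\<rho> \<in> {0..1}. \<forall>sr1 s1 r1 sr2 s2 r2 (a::real).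
        S_dom N sr1 s1 r1 \<longrightarrow> S_dom N sr2 s2 r2 \<longrightarrow> 0 \<le> a \<longrightarrow> a \<le> 1 \<longrightarrow>
        R_DF N \<rho> (a * sr1 + (1 - a) * sr2)
                  (\<lambda>j. a * s1 j + (1 - a) * s2 j) (\<lambda>j. a * r1 j + (1 - a) * r2 j)
        \<ge> a * R_DF N \<rho> sr1 s1 r1 + (1 - a) * R_DF N \<rho> sr2 s2 r2)
   \<and> (\<forall>t1 \<in> {0..1}. \<forall>t2 \<in> {0..1}. \<forall>sr1 s1 r1 sr2 s2 r2 (a::real).
        S_dom N sr1 s1 r1 \<longrightarrow> S_dom N sr2 s2 r2 \<longrightarrow> 0 \<le> a \<longrightarrow> a \<le> 1 \<longrightarrow>
        R_DF N (sqrt (a * t1 + (1 - a) * t2)) (a * sr1 + (1 - a) * sr2)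
                  (\<lambda>j. a * s1 j + (1 - a) * s2 j) (\<lambda>j. a * r1 j + (1 - a) * r2 j)
        \<ge> min (R_DF N (sqrt t1) sr1 s1 r1) (R_DF N (sqrt t2) sr2 s2 r2))"
  using assms by (intro conjI allI ballI impI R_DF_concave_rho R_DF_concave_snr R_DF_quasiconcave) simp_all

end
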